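(* Let $\epsilon\in(0,1/e]$, $p_v,p_e\in(0,1]$, let $G=(V,E)$ be a graph with nonnegative edge weights $w_e$, and let $\tilde x$ be the values set in step 1 of the non-crucial edge procedure (context). Then $$\mathbb{E}\Big[\sum_{e\in\mathcal{E}_Q\cap N}w_e\,\tilde x_e\Big]\ \ge\ (1-\epsilon)\,\varphi(N),$$ where the expectation is over the randomness of Algorithm 1 and the realization $\mathcal{G}$.
   Context: Realization model: given $p_v,p_e\in(0,1]$ and $G=(V,E)$ with weights $w_e\ge0$, a realization $\mathcal{G}=(\mathcal{V},\mathcal{E})$ keeps each vertex independently with probability $p_v$ and each edge $(u,v)$ independently with probability $p_e$ provided both $u,v$ are kept. Fix a deterministic algorithm computing a maximum-weight matching $M(H)$. $q_e:=\Pr[e\in M(\mathcal{G})]$. For $X\subseteq E$, $\varphi(X):=\sum_{e\in X}w_eq_e$. $\tau=\frac{\epsilon^3p_v^2p_e}{20\log(1/\epsilon)}$, $R=\frac{2000\log(1/\epsilon)\log(1/(\epsilon p_v^2p_e))}{\epsilon^4p_v^2p_e}$. $N=\{e\in E:q_e<\tau\}$. Algorithm 1: for $r=1,\dots,R$ draw an independent realization $\mathcal{G}_r$ and put the edges of $M(\mathcal{G}_r)$ into $Q=(V,E_Q)$; $f_e:=$ (number of $r$ with $e\in M(\mathcal{G}_r)$)$/R$. The realization $\mathcal{G}$ is independent of the algorithm's samples; $\mathcal{E}_Q=E_Q\cap\mathcal{E}$. Step 1 of the non-crucial edge procedure: for $e\in\mathcal{E}_Q\cap N$, $\tilde x_e=\min\{f_e/(p_v^2p_e),\,2\tau/(p_v^2p_e)\}$;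 $\tilde x_e=0$ otherwise. *)

theory Defs
  imports "HOL-Probability.Probability"
begin

definition is_graph :: "'a set \<Rightarrow> 'a set set \<Rightarrow> bool" where
  "is_graph V E \<longleftrightarrow> finite V \<and> (\<forall>e\<in>E. e \<subseteq> V \<and> card e = 2)"

definition is_matching :: "'a set set \<Rightarrow> bool" where
  "is_matching M \<longleftrightarrow> (\<forall>e\<in>M. \<forall>e'\<in>M. e \<noteq> e' \<longrightarrow> e \<inter> e' = {})"

definition mweight :: "('a set \<Rightarrow> real) \<Rightarrow> 'a set set \<Rightarrow> real" where
  "mweight w M = (\<Sum>e\<in>M. w e)"

definition is_max_weight_matching :: "('a set \<Rightarrow> real) \<Rightarrow> 'a set set \<Rightarrow> 'a set set \<Rightarrow> bool" where
  "is_max_weight_matching w Er M \<longleftrightarrow>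
     M \<subseteq> Er \<and> is_matching M \<and>
     (\<forall>M'. M' \<subseteq> Er \<longrightarrow> is_matching M' \<longrightarrow> mweight w M' \<le> mweight w M)"

text \<open>Distribution of a realization (kept vertices, kept edges): each vertex kept
  independently w.p. pv, each edge kept independently w.p. pe provided both endpoints are kept.\<close>
definition realization_pmf :: "'a set \<Rightarrow> 'a set set \<Rightarrow> real \<Rightarrow> real \<Rightarrow> ('a set \<times> 'a set set) pmf" where
  "realization_pmf V E pv pe =
     map_pmf (\<lambda>(kv, ke). ({v\<in>V. kv v}, {e\<in>E. ke e \<and> (\<forall>v\<in>e. kv v)}))
       (pair_pmf (Pi_pmf V False (\<lambda>_. bernoulli_pmf pv)) (Pi_pmf E False (\<lambda>_. bernoulli_pmf pe)))"

definition qprob :: "'a set \<Rightarrow> 'a set set \<Rightarrow> real \<Rightarrow> real \<Rightarrow> ('a set \<times> 'a set set \<Rightarrow> 'a set set) \<Rightarrow> 'a set \<Rightarrow> real" where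
  "qprob V E pv pe M e = measure_pmf.prob (realization_pmf V E pv pe) {H. e \<in> M H}"

definition phi :: "'a set \<Rightarrow> 'a set set \<Rightarrow> real \<Rightarrow> real \<Rightarrow> ('a set \<times> 'a set set \<Rightarrow> 'a set set)
     \<Rightarrow> ('a set \<Rightarrow> real) \<Rightarrow> 'a set set \<Rightarrow> real" where
  "phi V E pv pe M w X = (\<Sum>e\<in>X. w e * qprob V E pv pe M e)"

definition tau :: "real \<Rightarrow> real \<Rightarrow> real \<Rightarrow> real" where
  "tau eps pv pe = eps ^ 3 * pv ^ 2 * pe / (20 * ln (1 / eps))"

definition rounds :: "real \<Rightarrow> real \<Rightarrow> real \<Rightarrow> nat" where
  "rounds eps pv pe = nat \<lceil>2000 * ln (1 / eps) * ln (1 / (eps * pv ^ 2 * pe)) / (eps ^ 4 * pv ^ 2 * pe)\<rceil>"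

definition noncrucial :: "'a set \<Rightarrow> 'a set set \<Rightarrow> real \<Rightarrow> real \<Rightarrow> real \<Rightarrow> ('a set \<times> 'a set set \<Rightarrow> 'a set set) \<Rightarrow> 'a set set" where
  "noncrucial V E eps pv pe M = {e\<in>E. qprob V E pv pe M e < tau eps pv pe}"

definition samples_pmf :: "'a set \<Rightarrow> 'a set set \<Rightarrow> real \<Rightarrow> real \<Rightarrow> nat \<Rightarrow> (nat \<Rightarrow> 'a set \<times> 'a set set) pmf" where
  "samples_pmf V E pv pe R = Pi_pmf {..<R} ({}, {}) (\<lambda>_. realization_pmf V E pv pe)"

definition EQ :: "('a set \<times> 'a set set \<Rightarrow> 'a set set) \<Rightarrow> nat \<Rightarrow> (nat \<Rightarrow> 'a set \<times> 'a set set) \<Rightarrow> 'a set set" where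
  "EQ M R S = (\<Union>r<R. M (S r))"

definition freq :: "('a set \<times> 'a set set \<Rightarrow> 'a set set) \<Rightarrow> nat \<Rightarrow> (nat \<Rightarrow> 'a set \<times> 'a set set) \<Rightarrow> 'a set \<Rightarrow> real" where
  "freq M R S e = real (card {r\<in>{..<R}. e \<in> M (S r)}) / real R"

definition xtilde :: "'a set \<Rightarrow> 'a set set \<Rightarrow> real \<Rightarrow> real \<Rightarrow> real \<Rightarrow> ('a set \<times> 'a set set \<Rightarrow> 'a set set)
     \<Rightarrow> (nat \<Rightarrow> 'a set \<times> 'a set set) \<Rightarrow> 'a set \<times> 'a set set \<Rightarrow> 'a set \<Rightarrow> real" where
  "xtilde V E eps pv pe M S H e =
     (if e \<in> EQ M (rounds eps pv pe) S \<inter> snd H \<inter> noncrucial V E eps pv pe M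
      then min (freq M (rounds eps pv pe) S e / (pv ^ 2 * pe)) (2 * tau eps pv pe / (pv ^ 2 * pe))
      else 0)"

end

theory Submission
  imports Defs
begin

text \<open>For a non-crucial edge, \<open>q\<^sub>e < \<tau>\<close>, so capping the empirical frequency \<open>f\<^sub>e\<close> at \<open>2\<tau>\<close>
  costs at most \<open>(f\<^sub>e - q\<^sub>e)\<^sup>2 / (4\<tau>)\<close>; averaging over the \<open>R\<close> independent samples, whose empirical
  frequency has mean \<open>q\<^sub>e\<close> and variance at most \<open>q\<^sub>e / R\<close>, the expected loss is at most
  \<open>q\<^sub>e / (4R\<tau>) \<le> \<epsilon> q\<^sub>e\<close>. The division by \<open>p\<^sub>v\<^sup>2 p\<^sub>e\<close> exactly compensates for the
  probability that \<open>e\<close> survives in the independent realization, so each non-crucial edge contributes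
  at least \<open>(1 - \<epsilon>) w\<^sub>e q\<^sub>e\<close> in expectation.\<close>

lemma integrable_measure_pmf_bounded:
  fixes f :: "'a \<Rightarrow> real"
  assumes "\<And>x. \<bar>f x\<bar> \<le> B"
  shows "integrable (measure_pmf p) f"
  by (rule measure_pmf.integrable_const_bound[where B=B]) (auto simp: assms)

lemma expectation_pair_pmf_mult:
  fixes f :: "'a \<Rightarrow> real" and g :: "'b \<Rightarrow> real"
  assumes f: "\<And>x. 0 \<le> f x" "\<And>x. f x \<le> B" and g: "\<And>y. 0 \<le> g y" "\<And>y. g y \<le> C"
  shows "measure_pmf.expectation (pair_pmf p q) (\<lambda>z. f (fst z) * g (snd z)) =
         measure_pmf.expectation p f * measure_pmf.expectation q g"
proof -
  have "0 \<le> B" "0 \<le> C" using f g order_trans by blast+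
  then have int_pair: "integrable (measure_pmf (pair_pmf p q)) (\<lambda>z. f (fst z) * g (snd z))"
    using f g by (intro integrable_measure_pmf_bounded[where B="B * C"]) (auto simp: abs_mult intro!: mult_mono)
  have int_p: "integrable (measure_pmf p) f"
    using f by (intro integrable_measure_pmf_bounded[where B=B]) auto
  have int_q: "integrable (measure_pmf q) g"
    using g by (intro integrable_measure_pmf_bounded[where B=C]) auto
  have "ennreal (measure_pmf.expectation (pair_pmf p q) (\<lambda>z. f (fst z) * g (snd z)))
      = (\<integral>\<^sup>+a. \<integral>\<^sup>+b. ennreal (f a) * ennreal (g b) \<partial>q \<partial>p)"
    using int_pair f g
    by (simp add: nn_integral_eq_integral[symmetric] nn_integral_pair_pmf' ennreal_mult)
  also have "\<dots> = (\<integral>\<^sup>+a. f a \<partial>p) * (\<integral>\<^sup>+b. g b \<partial>q)"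
    by (simp add: nn_integral_cmult nn_integral_multc)
  also have "\<dots> = ennreal (measure_pmf.expectation p f * measure_pmf.expectation q g)"
    using int_p int_q f g by (simp add: nn_integral_eq_integral ennreal_mult)
  finally show ?thesis
    by (subst (asm) ennreal_inj) (auto simp: f g intro!: integral_nonneg_AE mult_nonneg_nonneg)
qed

lemma expectation_Pi_pmf_prod_subset:
  fixes h :: "'i \<Rightarrow> 'b \<Rightarrow> real"
  assumes "finite A" "B \<subseteq> A" and h: "\<And>x v. 0 \<le> h x v" "\<And>x v. h x v \<le> 1"
  shows "measure_pmf.expectation (Pi_pmf A d p) (\<lambda>y. \<Prod>x\<in>B. h x (y x)) =
         (\<Prod>x\<in>B. measure_pmf.expectation (p x) (h x))"
proof -
  let ?h = "\<lambda>x v. if x \<in> B then h x v else 1"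
  have "(\<lambda>y. \<Prod>x\<in>B. h x (y x)) = (\<lambda>y. \<Prod>x\<in>A. ?h x (y x))"
    using prod.inter_restrict[OF \<open>finite A\<close>, of "\<lambda>x. h x (_ x)" B] \<open>B \<subseteq> A\<close>
    by (auto simp: Int_absorb1)
  then have "measure_pmf.expectation (Pi_pmf A d p) (\<lambda>y. \<Prod>x\<in>B. h x (y x)) =
             (\<Prod>x\<in>A. measure_pmf.expectation (p x) (?h x))"
    by (simp only:) (rule expectation_prod_Pi_pmf[OF \<open>finite A\<close>],
        rule integrable_measure_pmf_bounded[where B=1], use h in auto)
  also have "\<dots> = (\<Prod>x\<in>A. if x \<in> B then measure_pmf.expectation (p x) (h x) else 1)"
    by (rule prod.cong) auto
  finally show ?thesis
    using \<open>B \<subseteq> A\<close> by (simp add: prod.inter_restrict[OF \<open>finite A\<close>, symmetric] Int_absorb1)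
qed

lemma is_graph_finite_edges: "is_graph V E \<Longrightarrow> finite E"
  unfolding is_graph_def by (meson Pow_iff finite_Pow_iff finite_subset subsetI)

lemma expectation_edge_kept:
  assumes "finite V" "finite E" "e \<in> E" "e \<subseteq> V" "0 \<le> pv" "pv \<le> 1" "0 \<le> pe" "pe \<le> 1"
  shows "measure_pmf.expectation (realization_pmf V E pv pe) (\<lambda>H. of_bool (e \<in> snd H)) =
         pv ^ card e * pe"
proof -
  define F where "F = (\<lambda>kv :: 'a \<Rightarrow> bool. \<Prod>v\<in>e. of_bool (kv v) :: real)"
  define G where "G = (\<lambda>ke :: 'a set \<Rightarrow> bool. \<Prod>x\<in>{e}. of_bool (ke x) :: real)"
  have "finite e" using assms(1,4) finite_subset by blast
  then have factor: "(\<lambda>H. of_bool (e \<in> snd H)) \<circ>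
        (\<lambda>(kv, ke). ({v\<in>V. kv v}, {e\<in>E. ke e \<and> (\<forall>v\<in>e. kv v)})) =
      (\<lambda>z. F (fst z) * G (snd z))"
    using assms(3) by (auto simp: F_def G_def fun_eq_iff prod_zero_iff)
  have "measure_pmf.expectation (realization_pmf V E pv pe) (\<lambda>H. of_bool (e \<in> snd H))
     = measure_pmf.expectation (pair_pmf (Pi_pmf V False (\<lambda>_. bernoulli_pmf pv))
         (Pi_pmf E False (\<lambda>_. bernoulli_pmf pe))) (\<lambda>z. F (fst z) * G (snd z))"
    unfolding realization_pmf_def integral_map_pmf factor[symmetric] by (simp add: comp_def)
  also have "\<dots> = measure_pmf.expectation (Pi_pmf V False (\<lambda>_. bernoulli_pmf pv)) F *
                  measure_pmf.expectation (Pi_pmf E False (\<lambda>_. bernoulli_pmf pe)) G"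
    by (rule expectation_pair_pmf_mult[where B=1 and C=1])
       (auto simp: F_def G_def intro!: prod_nonneg prod_le_1)
  also have "measure_pmf.expectation (Pi_pmf V False (\<lambda>_. bernoulli_pmf pv)) F = (\<Prod>v\<in>e. pv)"
    unfolding F_def by (subst expectation_Pi_pmf_prod_subset[where h="\<lambda>_. of_bool"]) (use assms in auto)
  also have "measure_pmf.expectation (Pi_pmf E False (\<lambda>_. bernoulli_pmf pe)) G = pe"
    unfolding G_def by (subst expectation_Pi_pmf_prod_subset[where h="\<lambda>_. of_bool"]) (use assms in auto)
  finally show ?thesis by simp
qed

lemma freq_nonneg: "0 \<le> freq M R S e"
  by (simp add: freq_def)

lemma freq_le_1: "freq M R S e \<le> 1"
proof -
  have "card {r\<in>{..<R}. e \<in> M (S r)} \<le> R"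
    using card_mono[of "{..<R}" "{r\<in>{..<R}. e \<in> M (S r)}"] by auto
  then show ?thesis by (auto simp: freq_def divide_le_eq_1)
qed

lemma freq_eq_average: "freq M R S e = (\<Sum>r<R. of_bool (e \<in> M (S r))) / R"
  by (simp add: freq_def Int_def conj_commute)

lemma expectation_prod_sampled_in_matching:
  assumes "B \<subseteq> {..<R}"
  shows "measure_pmf.expectation (samples_pmf V E pv pe R) (\<lambda>S. \<Prod>r\<in>B. of_bool (e \<in> M (S r))) =
         qprob V E pv pe M e ^ card B"
proof -
  have "measure_pmf.expectation (realization_pmf V E pv pe) (\<lambda>H. of_bool (e \<in> M H)) =
        qprob V E pv pe M e"
    using Bochner_Integration.integral_indicator[of "realization_pmf V E pv pe" "{H. e \<in> M H}"]
    unfolding qprob_def indicator_def by simp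
  then show ?thesis
    unfolding samples_pmf_def using assms
    by (subst expectation_Pi_pmf_prod_subset[where h="\<lambda>_ H. of_bool (e \<in> M H)"]) auto
qed

lemma expectation_freq:
  assumes "0 < R"
  shows "measure_pmf.expectation (samples_pmf V E pv pe R) (\<lambda>S. freq M R S e) = qprob V E pv pe M e"
proof -
  have "measure_pmf.expectation (samples_pmf V E pv pe R) (\<lambda>S. of_bool (e \<in> M (S r))) =
        qprob V E pv pe M e" if "r < R" for r
    using expectation_prod_sampled_in_matching[of "{r}" R] that by simp
  then show ?thesis
    using assms by (simp add: freq_eq_average Bochner_Integration.integral_sum
        integrable_measure_pmf_bounded[where B=1] del: sum_of_bool_eq)
qed

lemma expectation_freq_square_le:
  assumes "0 < R"
  shows "measure_pmf.expectation (samples_pmf V E pv pe R) (\<lambda>S. (freq M R S e)\<^sup>2) \<le>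
         (qprob V E pv pe M e)\<^sup>2 + qprob V E pv pe M e / R"
proof -
  define q where "q = qprob V E pv pe M e"
  let ?P = "samples_pmf V E pv pe R"
  let ?X = "\<lambda>r S. of_bool (e \<in> M (S r)) :: real"
  have q: "0 \<le> q" "q \<le> 1" unfolding q_def qprob_def by simp_all
  have pair: "measure_pmf.expectation ?P (\<lambda>S. ?X r S * ?X s S) \<le> q\<^sup>2 + (if r = s then q else 0)"
    if "r < R" "s < R" for r s
  proof -
    have "(\<lambda>S. ?X r S * ?X s S) = (\<lambda>S. \<Prod>i\<in>{r, s}. ?X i S)"
      by (cases "r = s") auto
    then have "measure_pmf.expectation ?P (\<lambda>S. ?X r S * ?X s S) = q ^ card {r, s}"
      using expectation_prod_sampled_in_matching[of "{r, s}" R] that by (simp add: q_def)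
    then show ?thesis using q by (cases "r = s") (simp_all add: power2_eq_square)
  qed
  have "(freq M R S e)\<^sup>2 = (\<Sum>r<R. \<Sum>s<R. ?X r S * ?X s S) / (real R)\<^sup>2" for S
    by (simp only: freq_eq_average power_divide) (simp only: power2_eq_square sum_product)
  then have "measure_pmf.expectation ?P (\<lambda>S. (freq M R S e)\<^sup>2) =
        (\<Sum>r<R. \<Sum>s<R. measure_pmf.expectation ?P (\<lambda>S. ?X r S * ?X s S)) / (real R)\<^sup>2"
    by (simp add: Bochner_Integration.integral_sum integrable_measure_pmf_bounded[where B=1]
        del: sum_of_bool_eq sum_mult_of_bool_eq sum_of_bool_mult_eq)
  also have "\<dots> \<le> (\<Sum>r<R. \<Sum>s<R. q\<^sup>2 + (if r = s then q else 0)) / (real R)\<^sup>2"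
    by (intro divide_right_mono sum_mono pair) auto
  also have "\<dots> = q\<^sup>2 + q / R"
    using assms(1) by (simp add: sum.distrib field_simps power2_eq_square)
  finally show ?thesis unfolding q_def .
qed

lemma min_cap_ge_quadratic_minorant:
  fixes f q t :: real
  assumes "0 < t" "q \<le> t"
  shows "f - (f - q)\<^sup>2 / (4 * t) \<le> min f (2 * t)"
proof -
  have "4 * t * (f - 2 * t) \<le> 4 * t * (f - q - t)"
    using assms by (intro mult_left_mono) auto
  also have "\<dots> \<le> (f - q)\<^sup>2"
    using zero_le_power2[of "f - q - 2 * t"] by (simp add: power2_eq_square algebra_simps)
  finally have "f - 2 * t \<le> (f - q)\<^sup>2 / (4 * t)"
    using assms by (simp add: field_simps)
  moreover have "0 \<le> (f - q)\<^sup>2 / (4 * t)"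
    using assms by simp
  ultimately show ?thesis by linarith
qed

lemma expectation_min_freq_ge:
  assumes "0 < R" "0 < t" "qprob V E pv pe M e \<le> t" "1 / (4 * real R * t) \<le> eps"
  shows "(1 - eps) * qprob V E pv pe M e \<le>
         measure_pmf.expectation (samples_pmf V E pv pe R) (\<lambda>S. min (freq M R S e) (2 * t))"
proof -
  let ?P = "samples_pmf V E pv pe R"
  let ?f = "\<lambda>S. freq M R S e"
  define q where "q = qprob V E pv pe M e"
  have "0 \<le> q" unfolding q_def qprob_def by simp
  have bounded: "\<bar>?f S\<bar> \<le> 1" "\<bar>(?f S)\<^sup>2\<bar> \<le> 1" "\<bar>min (?f S) (2 * t)\<bar> \<le> 1" for S
    using freq_nonneg[of M R S e] freq_le_1[of M R S e] \<open>0 < t\<close>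
    by (auto simp: abs_le_iff power_le_one)
  have integrable: "integrable ?P ?f" "integrable ?P (\<lambda>S. (?f S)\<^sup>2)"
    "integrable ?P (\<lambda>S. min (?f S) (2 * t))"
    by (rule integrable_measure_pmf_bounded, rule bounded)+
  have mean: "measure_pmf.expectation ?P ?f = q"
    using expectation_freq[OF assms(1)] by (simp add: q_def)
  have "(1 - eps) * q \<le> q - q / R / (4 * t)"
    using mult_left_mono[OF assms(4) \<open>0 \<le> q\<close>] by (simp add: algebra_simps)
  also have "\<dots> \<le> q - (measure_pmf.expectation ?P (\<lambda>S. (?f S)\<^sup>2) - 2 * q * q + q\<^sup>2) / (4 * t)"
  proof -
    have "measure_pmf.expectation ?P (\<lambda>S. (?f S)\<^sup>2) - 2 * q * q + q\<^sup>2 \<le> q / R"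
      using expectation_freq_square_le[OF assms(1), of V E pv pe M e]
      by (simp add: q_def power2_eq_square)
    from divide_right_mono[OF this, of "4 * t"] show ?thesis
      using \<open>0 < t\<close> by simp
  qed
  also have "\<dots> = measure_pmf.expectation ?P (\<lambda>S. ?f S - ((?f S)\<^sup>2 - 2 * q * ?f S + q\<^sup>2) / (4 * t))"
    using integrable mean
    by (simp add: integral_divide_zero Bochner_Integration.integral_diff Bochner_Integration.integral_add)
  also have "\<dots> \<le> measure_pmf.expectation ?P (\<lambda>S. min (?f S) (2 * t))"
  proof (rule integral_mono)
    show "integrable ?P (\<lambda>S. ?f S - ((?f S)\<^sup>2 - 2 * q * ?f S + q\<^sup>2) / (4 * t))"
      using integrable by (intro Bochner_Integration.integrable_diff integrable_divide
          Bochner_Integration.integrable_add integrable_mult_right) auto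
    show "?f S - ((?f S)\<^sup>2 - 2 * q * ?f S + q\<^sup>2) / (4 * t) \<le> min (?f S) (2 * t)" for S
    proof -
      have square: "(?f S - q)\<^sup>2 = (?f S)\<^sup>2 - 2 * q * ?f S + q\<^sup>2"
        by (simp add: power2_diff algebra_simps)
      show ?thesis
        using min_cap_ge_quadratic_minorant[OF \<open>0 < t\<close> assms(3)[folded q_def], of "?f S"]
        by (simp only: square)
    qed
  qed (fact integrable)
  finally show ?thesis unfolding q_def .
qed

lemma tau_rounds_bounds:
  assumes "0 < eps" "eps \<le> exp (-1)" "0 < pv" "pv \<le> 1" "0 < pe" "pe \<le> 1"
  shows "0 < tau eps pv pe" "0 < rounds eps pv pe"
    "1 / (4 * real (rounds eps pv pe) * tau eps pv pe) \<le> eps"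
proof -
  define c where "c = pv\<^sup>2 * pe"
  define X where "X = 2000 * ln (1 / eps) * ln (1 / (eps * c)) / (eps ^ 4 * c)"
  have "0 < c" "c \<le> 1" using assms by (auto simp: c_def power_le_one mult_le_one)
  have "ln eps \<le> -1" using assms(1,2) by (metis ln_exp ln_le_cancel_iff exp_gt_zero)
  then have ln_eps: "1 \<le> ln (1 / eps)" using assms(1) by (simp add: ln_div)
  have "1 / eps \<le> 1 / (eps * c)"
    using assms(1) \<open>0 < c\<close> \<open>c \<le> 1\<close> by (intro divide_left_mono) (auto simp: mult_left_le)
  then have "ln (1 / eps) \<le> ln (1 / (eps * c))"
    using assms(1) \<open>0 < c\<close> by (subst ln_le_cancel_iff) auto
  then have ln_ec: "1 \<le> ln (1 / (eps * c))" using ln_eps by linarith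
  have tau: "tau eps pv pe = eps ^ 3 * c / (20 * ln (1 / eps))"
    unfolding tau_def c_def by (simp add: mult.assoc)
  have ln_pos: "0 < ln (1 / eps)" "0 < ln (1 / (eps * c))" using ln_eps ln_ec by linarith+
  have "0 < X" unfolding X_def using ln_pos \<open>0 < c\<close> assms(1)
    by (intro divide_pos_pos mult_pos_pos) auto
  moreover have "rounds eps pv pe = nat \<lceil>X\<rceil>"
    unfolding rounds_def X_def c_def by (simp add: mult.assoc)
  then have "X \<le> real (rounds eps pv pe)" by (simp add: real_nat_ceiling_ge)
  ultimately show "0 < rounds eps pv pe" by linarith
  show "0 < tau eps pv pe" unfolding tau using ln_pos \<open>0 < c\<close> assms(1)
    by (intro divide_pos_pos mult_pos_pos) auto
  have "eps ^ 4 = eps * eps ^ 3" by (simp add: power_numeral_reduce)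
  then have "X * tau eps pv pe = 100 * ln (1 / (eps * c)) / eps"
    unfolding X_def tau using ln_pos(1) \<open>0 < c\<close> assms(1) by (simp add: field_simps)
  also have "\<dots> \<ge> 1 / (4 * eps)"
    using ln_ec assms(1) by (simp add: field_simps)
  finally have "1 / (4 * eps) \<le> real (rounds eps pv pe) * tau eps pv pe"
    using mult_right_mono[OF \<open>X \<le> _\<close> less_imp_le[OF \<open>0 < tau eps pv pe\<close>]] by linarith
  then show "1 / (4 * real (rounds eps pv pe) * tau eps pv pe) \<le> eps"
    using assms(1) \<open>0 < tau eps pv pe\<close> \<open>0 < rounds eps pv pe\<close> by (simp add: field_simps)
qed

lemma freq_eq_0_if_not_sampled: "e \<notin> EQ M R S \<Longrightarrow> freq M R S e = 0"
  by (simp add: freq_def EQ_def)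

lemma sum_xtilde_eq:
  assumes "finite E" "0 < pv" "0 < pe" "0 \<le> tau eps pv pe"
  shows "(\<Sum>e\<in>EQ M (rounds eps pv pe) S \<inter> snd H \<inter> noncrucial V E eps pv pe M.
            w e * xtilde V E eps pv pe M S H e) =
         (\<Sum>e\<in>noncrucial V E eps pv pe M. w e / (pv\<^sup>2 * pe) *
            (min (freq M (rounds eps pv pe) S e) (2 * tau eps pv pe) * of_bool (e \<in> snd H)))"
    (is "(\<Sum>e\<in>?EQ \<inter> snd H \<inter> ?N. _) = (\<Sum>e\<in>?N. ?summand e)")
proof -
  have "finite ?N" using assms(1) by (auto simp: noncrucial_def)
  have "(\<Sum>e\<in>?EQ \<inter> snd H \<inter> ?N. w e * xtilde V E eps pv pe M S H e) =
        (\<Sum>e\<in>?N. if e \<in> ?EQ \<inter> snd H then w e * xtilde V E eps pv pe M S H e else 0)"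
    by (simp only: Int_commute[of "?EQ \<inter> snd H"] sum.inter_restrict[OF \<open>finite ?N\<close>])
  also have "\<dots> = (\<Sum>e\<in>?N. ?summand e)"
  proof (rule sum.cong[OF refl])
    fix e assume "e \<in> ?N"
    have "min (a / (pv\<^sup>2 * pe)) (b / (pv\<^sup>2 * pe)) = min a b / (pv\<^sup>2 * pe)" for a b
      using assms(2,3) by (simp add: min_def divide_le_cancel not_less)
    then show "(if e \<in> ?EQ \<inter> snd H then w e * xtilde V E eps pv pe M S H e else 0) = ?summand e"
      using \<open>e \<in> ?N\<close> assms(4) freq_eq_0_if_not_sampled[of e M "rounds eps pv pe" S]
      by (auto simp: xtilde_def)
  qed
  finally show ?thesis .
qed

lemma expectation_sum_xtilde:
  assumes G: "is_graph V E" and "0 < pv" "pv \<le> 1" "0 < pe" "pe \<le> 1" "0 \<le> tau eps pv pe"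
  shows "measure_pmf.expectation
           (pair_pmf (samples_pmf V E pv pe (rounds eps pv pe)) (realization_pmf V E pv pe))
           (\<lambda>(S, H). \<Sum>e\<in>EQ M (rounds eps pv pe) S \<inter> snd H \<inter> noncrucial V E eps pv pe M.
                        w e * xtilde V E eps pv pe M S H e) =
         (\<Sum>e\<in>noncrucial V E eps pv pe M. w e *
            measure_pmf.expectation (samples_pmf V E pv pe (rounds eps pv pe))
              (\<lambda>S. min (freq M (rounds eps pv pe) S e) (2 * tau eps pv pe)))"
proof -
  let ?R = "rounds eps pv pe" and ?t = "tau eps pv pe" and ?c = "pv\<^sup>2 * pe"
  let ?P = "samples_pmf V E pv pe ?R" and ?Q = "realization_pmf V E pv pe"
  let ?g = "\<lambda>e S. min (freq M ?R S e) (2 * ?t)" and ?I = "\<lambda>e H. of_bool (e \<in> snd H) :: real"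
  have "finite E" using G by (rule is_graph_finite_edges)
  have g: "0 \<le> ?g e S" "?g e S \<le> 1" for e S
    using freq_nonneg[of M ?R S e] freq_le_1[of M ?R S e] assms(6) by auto
  have "measure_pmf.expectation (pair_pmf ?P ?Q) (\<lambda>z. ?g e (fst z) * ?I e (snd z)) =
        ?c * measure_pmf.expectation ?P (?g e)" if "e \<in> noncrucial V E eps pv pe M" for e
  proof -
    have "e \<in> E" using that by (simp add: noncrucial_def)
    then have "finite V" "e \<subseteq> V" "card e = 2" using G by (auto simp: is_graph_def)
    then have "measure_pmf.expectation ?Q (?I e) = ?c"
      using expectation_edge_kept[OF _ \<open>finite E\<close> \<open>e \<in> E\<close>] assms(2-5) by simp
    then show ?thesis
      using expectation_pair_pmf_mult[of "?g e" 1 "?I e" 1 ?P ?Q] g by simp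
  qed
  moreover have "integrable (pair_pmf ?P ?Q) (\<lambda>z. ?g e (fst z) * ?I e (snd z))" for e
    using g by (intro integrable_measure_pmf_bounded[where B=1]) (simp add: abs_le_iff)
  moreover have "?c \<noteq> 0" using assms(2,4) by simp
  ultimately show ?thesis
    using sum_xtilde_eq[OF \<open>finite E\<close> assms(2,4,6)]
    by (simp add: case_prod_unfold Bochner_Integration.integral_sum)
qed

theorem mainTheorem7:
  fixes V :: "'a set" and E :: "'a set set" and w :: "'a set \<Rightarrow> real"
    and eps pv pe :: real and M :: "'a set \<times> 'a set set \<Rightarrow> 'a set set"
  assumes "0 < eps" "eps \<le> exp (-1)"
    and "0 < pv" "pv \<le> 1" "0 < pe" "pe \<le> 1"
    and "is_graph V E"
    and "\<And>e. e \<in> E \<Longrightarrow> 0 \<le> w e"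
    and "\<And>Vr Er. Vr \<subseteq> V \<Longrightarrow> Er \<subseteq> E \<Longrightarrow> (\<forall>e\<in>Er. e \<subseteq> Vr) \<Longrightarrow>
           is_max_weight_matching w Er (M (Vr, Er))"
  shows "measure_pmf.expectation
           (pair_pmf (samples_pmf V E pv pe (rounds eps pv pe)) (realization_pmf V E pv pe))
           (\<lambda>(S, H). \<Sum>e\<in>EQ M (rounds eps pv pe) S \<inter> snd H \<inter> noncrucial V E eps pv pe M.
                        w e * xtilde V E eps pv pe M S H e)
         \<ge> (1 - eps) * phi V E pv pe M w (noncrucial V E eps pv pe M)"
proof -
  note bounds = tau_rounds_bounds[OF assms(1-6)]
  have "(1 - eps) * phi V E pv pe M w (noncrucial V E eps pv pe M) =
        (\<Sum>e\<in>noncrucial V E eps pv pe M. w e * ((1 - eps) * qprob V E pv pe M e))"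
    by (simp add: phi_def sum_distrib_left algebra_simps)
  also have "\<dots> \<le> (\<Sum>e\<in>noncrucial V E eps pv pe M. w e *
      measure_pmf.expectation (samples_pmf V E pv pe (rounds eps pv pe))
        (\<lambda>S. min (freq M (rounds eps pv pe) S e) (2 * tau eps pv pe)))"
    using bounds assms(8)
    by (intro sum_mono mult_left_mono expectation_min_freq_ge) (auto simp: noncrucial_def)
  also have "\<dots> = measure_pmf.expectation
      (pair_pmf (samples_pmf V E pv pe (rounds eps pv pe)) (realization_pmf V E pv pe))
      (\<lambda>(S, H). \<Sum>e\<in>EQ M (rounds eps pv pe) S \<inter> snd H \<inter> noncrucial V E eps pv pe M.
                   w e * xtilde V E eps pv pe M S H e)"
    using bounds by (intro expectation_sum_xtilde[symmetric] assms(3-7)) simp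
  finally show ?thesis .
qed

end
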